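(* Let $t$ be a closed term and $\pi\triangleright\ \vdash^{(m,e)} t:\mathtt{n}$ a derivation (with empty type context) in the silly multi type system. Then there is a $\to_w$-normal term $n$ and a reduction sequence $d: t\to_y^* n$ such that the number of $\to_{ym}$ steps in $d$ is exactly $m$ and the number of $\to_{yeAY}$ and $\to_{yeYN}$ steps in $d$ is exactly $e$.
   Context: Terms: $t ::= x \mid \lambda x.t \mid t\,u \mid t[x\backslash u]$ ($t[x\backslash u]$ an explicit substitution binding $x$ in $t$; terms up to $\alpha$). Values $v ::= \lambda x.t$. Substitution contexts $S ::= \langle\cdot\rangle\mid S[x\backslash u]$. Weak contexts $W ::= \langle\cdot\rangle \mid W\,t \mid t\,W \mid t[x\backslash W] \mid W[x\backslash u]$. For a class of contexts $K$, $K\langle\langle t\rangle\rangle$ is plugging without capture of free variables of $t$. Root rules: $S\langle\lambda x.t\rangle u\mapsto_m S\langle t[x\backslash u]\rangle$; $K\langle\langle x\rangle\rangle[x\backslash u]\mapsto_{e_K} K\langle\langle u\rangle\rangle[x\backslash u]$; $t[x\backslash S\langle v\rangle]\mapsto_{gcv} S\langle t\rangle$ if $x\notin\mathrm{fv}(t)$. $\to_w$ is the union of the closures under weak contexts of $\mapsto_m$, $\mapsto_{e_W}$ ($K$ = weak contexts), $\mapsto_{gcv}$. Call-by-silly strategy: answers $a ::= v\mid a[x\backslash a']$; name contexts $N ::= \langle\cdot\rangle\mid N t\mid N[x\backslash t]$; auxiliary contexts $A ::= \langle\cdot\rangle\mid a[x\backslash A]\mid A[x\backslash t]$; silly contexts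 $Y ::= A\langle N\rangle$; $\to_{ym} := Y\langle\mapsto_m\rangle$; $\to_{yeAY} := A\langle\mapsto_{e_Y}\rangle$; $\to_{yeYN} := Y\langle\mapsto_{e_N}\rangle$; $\to_{ygcv}:=Y\langle\mapsto_{gcv}\rangle$; $\to_y$ is their union. Silly multi types: linear types $L ::= \mathtt{n} \mid M\multimap L$; multi types $M ::= [L_i]_{i\in I}$ finite multisets ($\mathbf{0}$ empty, $\uplus$ sum). Type contexts $\Gamma$ map variables to multi types with finite support; $\uplus$ pointwise; $\Gamma\setminus\!\!\setminus x$ sets $x$ to $\mathbf{0}$. Rules: (ax) $x:[L]\vdash^{(0,1)} x:L$; (many) from $(\Gamma_i\vdash^{(m_i,e_i)} t : L_i)_{i\in I}$, $I$ finite possibly empty, infer $\uplus_i\Gamma_i\vdash^{(\sum m_i,\sum e_i)} t : [L_i]_{i\in I}$; ($\mathrm{ax}_\lambda$) $\vdash^{(0,0)}\lambda x.t:\mathtt{n}$; ($\lambda$) from $\Gamma\vdash^{(m,e)}t:L$ infer $\Gamma\setminus\!\!\setminus x\vdash^{(m,e)}\lambda x.t:\Gamma(x)\multimap L$; (@) from $\Gamma\vdash^{(m,e)} t : M\multimap L$ and $\Delta\vdash^{(m',e')} u : M\uplus[\mathtt{n}]$ infer $\Gamma\uplus\Delta\vdash^{(m+m'+1,e+e')} tu : L$; (ES) from $\Gamma\vdash^{(m,e)} t:L$ and $\Delta\vdash^{(m',e')}u:\Gamma(x)\uplus[\mathtt{n}]$ infer $(\Gamma\setminus\!\!\setminus x)\uplus\Delta\vdash^{(m+m',e+e')}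 t[x\backslash u]:L$. *)

theory Defs
  imports Main "HOL-Library.Multiset"
begin

text \<open>Terms up to alpha are represented with de Bruijn indices.
  ES t u stands for t[x\u], where x is index 0 in t.\<close>

datatype trm = Var nat | Lam trm | App trm trm | ES trm trm

fun shift :: "nat \<Rightarrow> nat \<Rightarrow> trm \<Rightarrow> trm" where
  "shift n k (Var i) = Var (if i < k then i else i + n)"
| "shift n k (Lam t) = Lam (shift n (Suc k) t)"
| "shift n k (App t u) = App (shift n k t) (shift n k u)"
| "shift n k (ES t u) = ES (shift n (Suc k) t) (shift n k u)"

fun fv :: "trm \<Rightarrow> nat set" where
  "fv (Var i) = {i}"
| "fv (Lam t) = {i. Suc i \<in> fv t}"
| "fv (App t u) = fv t \<union> fv u"
| "fv (ES t u) = {i. Suc i \<in> fv t} \<union> fv u"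

definition closed :: "trm \<Rightarrow> bool" where
  "closed t \<longleftrightarrow> fv t = {}"

inductive is_value :: "trm \<Rightarrow> bool" where
  "is_value (Lam t)"

text \<open>Weak contexts (no hole under lambda). Every element of ctx is a weak context.\<close>
datatype ctx = Hole | CAppL ctx trm | CAppR trm ctx | CESL ctx trm | CESR trm ctx

fun plug :: "ctx \<Rightarrow> trm \<Rightarrow> trm" where
  "plug Hole s = s"
| "plug (CAppL C t) s = App (plug C s) t"
| "plug (CAppR t C) s = App t (plug C s)"
| "plug (CESL C u) s = ES (plug C s) u"
| "plug (CESR t C) s = ES t (plug C s)"

fun depth :: "ctx \<Rightarrow> nat" where
  "depth Hole = 0"
| "depth (CAppL C t) = depth C"
| "depth (CAppR t C) = depth C"
| "depth (CESL C u) = Suc (depth C)"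
| "depth (CESR t C) = depth C"

fun ccomp :: "ctx \<Rightarrow> ctx \<Rightarrow> ctx" where
  "ccomp Hole D = D"
| "ccomp (CAppL C t) D = CAppL (ccomp C D) t"
| "ccomp (CAppR t C) D = CAppR t (ccomp C D)"
| "ccomp (CESL C u) D = CESL (ccomp C D) u"
| "ccomp (CESR t C) D = CESR t (ccomp C D)"

inductive is_S :: "ctx \<Rightarrow> bool" where
  "is_S Hole"
| "is_S S \<Longrightarrow> is_S (CESL S u)"

inductive is_answer :: "trm \<Rightarrow> bool" where
  "is_answer (Lam t)"
| "is_answer a \<Longrightarrow> is_answer a' \<Longrightarrow> is_answer (ES a a')"

inductive is_N :: "ctx \<Rightarrow> bool" where
  "is_N Hole"
| "is_N N \<Longrightarrow> is_N (CAppL N t)"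
| "is_N N \<Longrightarrow> is_N (CESL N t)"

inductive is_A :: "ctx \<Rightarrow> bool" where
  "is_A Hole"
| "is_answer a \<Longrightarrow> is_A A \<Longrightarrow> is_A (CESR a A)"
| "is_A A \<Longrightarrow> is_A (CESL A t)"

definition is_Y :: "ctx \<Rightarrow> bool" where
  "is_Y C \<longleftrightarrow> (\<exists>A N. is_A A \<and> is_N N \<and> C = ccomp A N)"

definition root_m :: "trm \<Rightarrow> trm \<Rightarrow> bool" where
  "root_m s s' \<longleftrightarrow> (\<exists>S b u. is_S S \<and> s = App (plug S (Lam b)) u
      \<and> s' = plug S (ES b (shift (depth S) 0 u)))"

definition root_e :: "(ctx \<Rightarrow> bool) \<Rightarrow> trm \<Rightarrow> trm \<Rightarrow> bool" where
  "root_e P s s' \<longleftrightarrow> (\<exists>K u. P K \<and> s = ES (plug K (Var (depth K))) u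
      \<and> s' = ES (plug K (shift (Suc (depth K)) 0 u)) u)"

text \<open>t[x\S<v>] \<mapsto>gcv S<t> if x not free in t (i.e. t is a shifted term)\<close>
definition root_gcv :: "trm \<Rightarrow> trm \<Rightarrow> bool" where
  "root_gcv s s' \<longleftrightarrow> (\<exists>r S v. is_S S \<and> is_value v \<and> s = ES (shift 1 0 r) (plug S v)
      \<and> s' = plug S (shift (depth S) 0 r))"

definition wstep :: "trm \<Rightarrow> trm \<Rightarrow> bool" where
  "wstep t t' \<longleftrightarrow> (\<exists>W s s'. t = plug W s \<and> t' = plug W s'
      \<and> (root_m s s' \<or> root_e (\<lambda>_. True) s s' \<or> root_gcv s s'))"

definition w_normal :: "trm \<Rightarrow> bool" where
  "w_normal t \<longleftrightarrow> \<not> (\<exists>t'. wstep t t')"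

datatype ykind = Ym | YeAY | YeYN | Ygcv

fun ystep :: "trm \<Rightarrow> ykind \<Rightarrow> trm \<Rightarrow> bool" where
  "ystep t Ym t' = (\<exists>Y s s'. is_Y Y \<and> t = plug Y s \<and> t' = plug Y s' \<and> root_m s s')"
| "ystep t YeAY t' = (\<exists>A s s'. is_A A \<and> t = plug A s \<and> t' = plug A s' \<and> root_e is_Y s s')"
| "ystep t YeYN t' = (\<exists>Y s s'. is_Y Y \<and> t = plug Y s \<and> t' = plug Y s' \<and> root_e is_N s s')"
| "ystep t Ygcv t' = (\<exists>Y s s'. is_Y Y \<and> t = plug Y s \<and> t' = plug Y s' \<and> root_gcv s s')"

inductive ysteps :: "trm \<Rightarrow> ykind list \<Rightarrow> trm \<Rightarrow> bool" where
  refl: "ysteps t [] t"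
| step: "ystep t k t' \<Longrightarrow> ysteps t' ks t'' \<Longrightarrow> ysteps t (k # ks) t''"

datatype ltype = TN | Arr "ltype multiset" ltype

type_synonym tctx = "nat \<Rightarrow> ltype multiset"

definition empty_ctx :: tctx where "empty_ctx = (\<lambda>_. {#})"

text \<open>lty G t L m e : G |-^(m,e) t : L ;  mty G t M m e : G |-^(m,e) t : M (rule many)\<close>
inductive lty :: "tctx \<Rightarrow> trm \<Rightarrow> ltype \<Rightarrow> nat \<Rightarrow> nat \<Rightarrow> bool"
  and mty :: "tctx \<Rightarrow> trm \<Rightarrow> ltype multiset \<Rightarrow> nat \<Rightarrow> nat \<Rightarrow> bool" where
  ax: "lty (empty_ctx(i := {#L#})) (Var i) L 0 1"
| ax_lam: "lty empty_ctx (Lam t) TN 0 0"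
| lam: "lty G t L m e \<Longrightarrow> lty (\<lambda>i. G (Suc i)) (Lam t) (Arr (G 0) L) m e"
| app: "lty G t (Arr M L) m e \<Longrightarrow> mty D u (M + {#TN#}) m' e'
        \<Longrightarrow> lty (\<lambda>i. G i + D i) (App t u) L (m + m' + 1) (e + e')"
| es: "lty G t L m e \<Longrightarrow> mty D u (G 0 + {#TN#}) m' e'
        \<Longrightarrow> lty (\<lambda>i. G (Suc i) + D i) (ES t u) L (m + m') (e + e')"
| many_nil: "mty empty_ctx t {#} 0 0"
| many_cons: "lty G t L m e \<Longrightarrow> mty D t M m' e'
        \<Longrightarrow> mty (\<lambda>i. G i + D i) t (add_mset L M) (m + m') (e + e')"

end

theory Submission
  imports Defs "HOL-Library.Function_Algebras"
begin

(* Quantitative subject reduction: a typing of Y<s> factors through a typing of the hole s,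
   which can be replaced by any term of the same type, so only root redexes matter; there an
   m-step removes one application rule (m decreases by one) and an e-step removes one
   variable axiom (e decreases by one).  Progress: a term typed with n in the empty type
   context is an answer or has a non-gc step, since a variable in evaluation position would
   show up in the type context.  Answers are typed with indices (0,0) and reach their weak
   normal form by gc steps alone, which are not counted; induction on m + e concludes. *)

(* The induction method eta-expands function-typed variables, and with these rules the
   simplifier would then turn \<lambda>i. (G + D) i into \<lambda>i. G i + D i, which no longer matches
   G + D; they are used explicitly instead. *)
declare zero_fun_apply [simp del] plus_fun_apply [simp del]

lemma empty_ctx_eq_0 [simp]: "empty_ctx = 0"
  by (simp add: empty_ctx_def zero_fun_def)

lemma plug_ccomp [simp]: "plug (ccomp C D) s = plug C (plug D s)"
  by (induction C) auto

lemma depth_ccomp [simp]: "depth (ccomp C D) = depth C + depth D"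
  by (induction C) auto

lemma ccomp_Hole [simp]: "ccomp C Hole = C"
  by (induction C) auto

lemma ccomp_assoc: "ccomp (ccomp C D) E = ccomp C (ccomp D E)"
  by (induction C) auto

lemma shift_0 [simp]: "shift 0 k t = t"
  by (induction t arbitrary: k) auto

lemma shift_shift: "shift a k (shift b k t) = shift (a + b) k t"
  by (induction t arbitrary: k) auto

lemma size_shift [simp]: "size (shift n k t) = size t"
  by (induction t arbitrary: k) auto

lemma size_plug: "size (plug C x) + size y = size (plug C y) + size x"
  by (induction C) auto

definition drop_tctx :: "nat \<Rightarrow> tctx \<Rightarrow> tctx" where
  "drop_tctx d G = (\<lambda>i. G (i + d))"

definition shift_tctx :: "nat \<Rightarrow> nat \<Rightarrow> tctx \<Rightarrow> tctx" where
  "shift_tctx n k G = (\<lambda>i. if i < k then G i else if i < k + n then {#} else G (i - n))"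

lemma drop_tctx_apply [simp]: "drop_tctx d G i = G (i + d)"
  by (simp add: drop_tctx_def)

lemma drop_tctx_0 [simp]: "drop_tctx 0 G = G"
  by (simp add: drop_tctx_def)

lemma plus_tctx_eta: "(\<lambda>i. G i + D i) = G + (D :: tctx)"
  by (simp add: plus_fun_def)

lemma shift_tctx_add: "shift_tctx n k (G + D) = shift_tctx n k G + shift_tctx n k D"
  by (auto simp: shift_tctx_def fun_eq_iff plus_fun_apply)

lemma shift_tctx_Suc: "(\<lambda>i. shift_tctx n (Suc k) G (Suc i)) = shift_tctx n k (\<lambda>i. G (Suc i))"
  by (auto simp: shift_tctx_def fun_eq_iff Suc_diff_le)

lemma shift_tctx_0 [simp]: "shift_tctx n k 0 = 0"
  by (simp add: shift_tctx_def fun_eq_iff zero_fun_apply)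

section \<open>Typing derivations\<close>

lemma lty_VarI: "H = 0(i := {#L#}) \<Longrightarrow> lty H (Var i) L 0 1"
  using ax by simp

lemma lty_LamI:
  "lty G t L m e \<Longrightarrow> H = (\<lambda>i. G (Suc i)) \<Longrightarrow> T = Arr (G 0) L \<Longrightarrow> lty H (Lam t) T m e"
  using lam by simp

lemma lty_AppI: "lty G t (Arr M L) m e \<Longrightarrow> mty D u (M + {#TN#}) m' e' \<Longrightarrow> H = G + D
    \<Longrightarrow> m'' = m + m' + 1 \<Longrightarrow> e'' = e + e' \<Longrightarrow> lty H (App t u) L m'' e''"
  using app by (simp add: plus_fun_def)

lemma lty_ESI: "lty G t L m e \<Longrightarrow> mty D u (G 0 + {#TN#}) m' e' \<Longrightarrow> H = (\<lambda>i. G (Suc i)) + D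
    \<Longrightarrow> m'' = m + m' \<Longrightarrow> e'' = e + e' \<Longrightarrow> lty H (ES t u) L m'' e''"
  using es by (simp add: plus_fun_def)

lemma mty_add_msetI: "lty G t L m e \<Longrightarrow> mty D t M m' e' \<Longrightarrow> H = G + D
    \<Longrightarrow> m'' = m + m' \<Longrightarrow> e'' = e + e' \<Longrightarrow> mty H t (add_mset L M) m'' e''"
  using many_cons by (simp add: plus_fun_def)

lemma lty_VarD:
  assumes "lty G (Var i) L m e"
  shows "G = 0(i := {#L#}) \<and> m = 0 \<and> e = 1"
  using assms by (cases rule: lty.cases) auto

lemma lty_LamE:
  assumes "lty G (Lam t) L m e"
  obtains "G = 0" "L = TN" "m = 0" "e = 0"
  | G' L' where "G = (\<lambda>i. G' (Suc i))" "L = Arr (G' 0) L'" "lty G' t L' m e"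
  using assms by (cases rule: lty.cases) auto

lemma lty_AppE:
  assumes "lty G (App t u) L m e"
  obtains G1 D M m1 e1 m2 e2 where "G = G1 + D" "m = m1 + m2 + 1" "e = e1 + e2"
    "lty G1 t (Arr M L) m1 e1" "mty D u (M + {#TN#}) m2 e2"
  using assms by (cases rule: lty.cases) (simp_all add: plus_fun_def)

lemma lty_ESE:
  assumes "lty G (ES t u) L m e"
  obtains G1 D m1 e1 m2 e2 where "G = (\<lambda>i. G1 (Suc i)) + D" "m = m1 + m2" "e = e1 + e2"
    "lty G1 t L m1 e1" "mty D u (G1 0 + {#TN#}) m2 e2"
  using assms by (cases rule: lty.cases) (simp_all add: plus_fun_def)

lemma lty_Lam_TN: "lty 0 (Lam t) TN 0 0"
  using ax_lam by simp

lemma mty_emptyI: "mty 0 t {#} 0 0"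
  using many_nil by simp

lemma mty_empty_iff: "mty D t {#} m e \<longleftrightarrow> D = 0 \<and> m = 0 \<and> e = 0"
  using mty_emptyI by (auto elim: mty.cases)

lemma mty_singleton_iff: "mty D t {#L#} m e \<longleftrightarrow> lty D t L m e"
proof
  assume "mty D t {#L#} m e"
  then show "lty D t L m e"
    by (cases rule: mty.cases) (auto simp: mty_empty_iff zero_fun_apply)
next
  assume "lty D t L m e"
  then show "mty D t {#L#} m e"
    by (rule mty_add_msetI[OF _ mty_emptyI]) auto
qed

lemma mty_splitE:
  assumes "mty D t (M1 + M2) m e"
  obtains D1 D2 m1 m2 e1 e2 where "mty D1 t M1 m1 e1" "mty D2 t M2 m2 e2"
    "D = D1 + D2" "m = m1 + m2" "e = e1 + e2"
proof -
  have "\<exists>D1 D2 m1 m2 e1 e2. mty D1 t M1 m1 e1 \<and> mty D2 t M2 m2 e2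
      \<and> D = D1 + D2 \<and> m = m1 + m2 \<and> e = e1 + e2"
    if "mty D t M m e" "M = M1 + M2" for D t M m e M1 M2
    using that
  proof (induction arbitrary: M1 M2 rule: lty_mty.inducts(2)[where ?P1.0 = "\<lambda>_ _ _ _ _. True"])
    case (many_nil t)
    then show ?case
      using mty_emptyI by fastforce
  next
    case (many_cons G t L m e D M m' e')
    show ?case
    proof (cases "L \<in># M1")
      case True
      then obtain M1' where M1: "M1 = add_mset L M1'"
        by (metis multi_member_split)
      with many_cons.prems have "M = M1' + M2"
        by simp
      then obtain D1 D2 m1 m2 e1 e2 where IH:
        "mty D1 t M1' m1 e1" "mty D2 t M2 m2 e2" "D = D1 + D2" "m' = m1 + m2" "e' = e1 + e2"
        using many_cons.IH by blast
      have "mty (G + D1) t M1 (m + m1) (e + e1)"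
        using M1 IH(1) many_cons.hyps(1) by (auto intro: mty_add_msetI)
      moreover have "G + D = (G + D1) + D2" "m + m' = (m + m1) + m2" "e + e' = (e + e1) + e2"
        using IH by (simp_all add: add_ac)
      ultimately show ?thesis
        unfolding plus_tctx_eta using IH(2) by blast
    next
      case False
      then obtain M2' where M2: "M2 = add_mset L M2'"
        using many_cons.prems by (metis add_mset_add_single multi_member_split multi_member_this union_iff)
      with many_cons.prems have "M = M1 + M2'"
        by simp
      then obtain D1 D2 m1 m2 e1 e2 where IH:
        "mty D1 t M1 m1 e1" "mty D2 t M2' m2 e2" "D = D1 + D2" "m' = m1 + m2" "e' = e1 + e2"
        using many_cons.IH by blast
      have "mty (G + D2) t M2 (m + m2) (e + e2)"
        using M2 IH(2) many_cons.hyps(1) by (auto intro: mty_add_msetI)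
      moreover have "G + D = D1 + (G + D2)" "m + m' = m1 + (m + m2)" "e + e' = e1 + (e + e2)"
        using IH by (simp_all add: add_ac)
      ultimately show ?thesis
        unfolding plus_tctx_eta using IH(1) by blast
    qed
  qed auto
  with assms that show thesis
    by blast
qed

lemma shift_tctx_single:
  "shift_tctx n k (0(i := M)) = 0((if i < k then i else i + n) := M)"
  by (auto simp: shift_tctx_def fun_eq_iff zero_fun_apply)

lemma lty_mty_shift:
  "lty G t L m e \<Longrightarrow> lty (shift_tctx n k G) (shift n k t) L m e"
  "mty D t M m e \<Longrightarrow> mty (shift_tctx n k D) (shift n k t) M m e"
proof (induction arbitrary: k and k rule: lty_mty.inducts)
  case (ax i L)
  show ?case
    unfolding shift.simps empty_ctx_eq_0 by (rule lty_VarI[OF shift_tctx_single])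
next
  case (ax_lam t)
  show ?case
    using lty_Lam_TN by simp
next
  case (lam G t L m e)
  show ?case
    unfolding shift.simps
    by (rule lty_LamI[OF lam.IH]) (simp_all add: shift_tctx_Suc, simp add: shift_tctx_def)
next
  case (app G t M L m e D u m' e')
  show ?case
    unfolding shift.simps
    by (rule lty_AppI[OF app.IH]) (simp_all add: shift_tctx_add plus_tctx_eta)
next
  case (es G t L m e D u m' e')
  show ?case
    unfolding shift.simps
  proof (rule lty_ESI[OF es.IH(1)])
    show "mty (shift_tctx n k D) (shift n k u) (shift_tctx n (Suc k) G 0 + {#TN#}) m' e'"
      using es.IH(2) by (simp add: shift_tctx_def)
    show "shift_tctx n k (\<lambda>i. G (Suc i) + D i)
        = (\<lambda>i. shift_tctx n (Suc k) G (Suc i)) + shift_tctx n k D"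
      by (auto simp: shift_tctx_def fun_eq_iff plus_fun_apply Suc_diff_le)
  qed simp_all
next
  case (many_nil t)
  show ?case
    using mty_emptyI by simp
next
  case (many_cons G t L m e D M m' e')
  show ?case
    by (rule mty_add_msetI[OF many_cons.IH]) (simp_all add: shift_tctx_add plus_tctx_eta)
qed

lemma lty_answer_TN:
  "is_answer a \<Longrightarrow> lty G a TN m e \<Longrightarrow> G = 0 \<and> m = 0 \<and> e = 0"
proof (induction arbitrary: G m e rule: is_answer.induct)
  case (1 t)
  then show ?case
    by (auto elim: lty_LamE)
next
  case (2 a a')
  from \<open>lty G (ES a a') TN m e\<close> obtain G1 D m1 e1 m2 e2 where
    "G = (\<lambda>i. G1 (Suc i)) + D" "m = m1 + m2" "e = e1 + e2"
    "lty G1 a TN m1 e1" "mty D a' (G1 0 + {#TN#}) m2 e2"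
    by (rule lty_ESE)
  moreover have "G1 = 0" "m1 = 0" "e1 = 0"
    using "2.IH"(1) \<open>lty G1 a TN m1 e1\<close> by blast+
  moreover have "D = 0" "m2 = 0" "e2 = 0"
  proof -
    have "lty D a' TN m2 e2"
      using \<open>mty D a' (G1 0 + {#TN#}) m2 e2\<close> \<open>G1 = 0\<close> by (simp add: mty_singleton_iff zero_fun_apply)
    then show "D = 0" "m2 = 0" "e2 = 0"
      using "2.IH"(2) by blast+
  qed
  ultimately show ?case
    by (simp add: zero_fun_def)
qed

section \<open>Factoring a typing through a context hole\<close>

lemma drop_tctx_add: "drop_tctx d (G + D) = drop_tctx d G + drop_tctx d D"
  by (simp add: fun_eq_iff plus_fun_apply)

lemma drop_tctx_drop_tctx: "drop_tctx d (drop_tctx d' G) = drop_tctx (d + d') G"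
  by (simp add: fun_eq_iff add_ac)

(* (Gr, mr, er) is the part of the derivation contributed by C itself; a new hole must agree
   with the old one on the types of the variables bound by C. *)
definition factors_through_hole ::
    "ctx \<Rightarrow> (ltype \<Rightarrow> bool) \<Rightarrow> tctx \<Rightarrow> trm \<Rightarrow> ltype \<Rightarrow> nat \<Rightarrow> nat \<Rightarrow> bool" where
  "factors_through_hole C P G x L m e \<longleftrightarrow> (\<exists>Gx Lx mx ex Gr mr er.
      P Lx \<and> lty Gx x Lx mx ex \<and> G = Gr + drop_tctx (depth C) Gx \<and> m = mr + mx \<and> e = er + ex
      \<and> (\<forall>x' G' m' e'. lty G' x' Lx m' e' \<longrightarrow> (\<forall>i < depth C. G' i = Gx i)
          \<longrightarrow> lty (Gr + drop_tctx (depth C) G') (plug C x') L (mr + m') (er + e')))"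

lemma factors_through_holeI:
  assumes "P Lx" "lty Gx x Lx mx ex" "G = Gr + drop_tctx (depth C) Gx" "m = mr + mx" "e = er + ex"
    and "\<And>x' G' m' e'. lty G' x' Lx m' e' \<Longrightarrow> (\<And>i. i < depth C \<Longrightarrow> G' i = Gx i)
      \<Longrightarrow> lty (Gr + drop_tctx (depth C) G') (plug C x') L (mr + m') (er + e')"
  shows "factors_through_hole C P G x L m e"
  unfolding factors_through_hole_def using assms by blast

lemma factors_through_holeE:
  assumes "factors_through_hole C P G x L m e"
  obtains Gx Lx mx ex Gr mr er where
    "lty Gx x Lx mx ex" "P Lx" "G = Gr + drop_tctx (depth C) Gx" "m = mr + mx" "e = er + ex"
    "\<And>x' G' m' e'. lty G' x' Lx m' e' \<Longrightarrow> (\<And>i. i < depth C \<Longrightarrow> G' i = Gx i)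
      \<Longrightarrow> lty (Gr + drop_tctx (depth C) G') (plug C x') L (mr + m') (er + e')"
  using assms unfolding factors_through_hole_def by blast

lemma factors_through_Hole:
  "P L \<Longrightarrow> lty G x L m e \<Longrightarrow> factors_through_hole Hole P G x L m e"
  by (rule factors_through_holeI[where Gr = 0 and mr = 0 and er = 0]) simp_all

lemma factors_through_ccomp:
  assumes outer: "factors_through_hole C P G (plug D x) L m e"
    and inner: "\<And>G' L' m' e'. P L' \<Longrightarrow> lty G' (plug D x) L' m' e'
      \<Longrightarrow> factors_through_hole D Q G' x L' m' e'"
  shows "factors_through_hole (ccomp C D) Q G x L m e"
proof -
  obtain Gy Ly my ey Gr mr er where y: "lty Gy (plug D x) Ly my ey" "P Ly"
      "G = Gr + drop_tctx (depth C) Gy" "m = mr + my" "e = er + ey"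
    and replug_C: "\<And>y' G' m' e'. lty G' y' Ly m' e' \<Longrightarrow> (\<And>i. i < depth C \<Longrightarrow> G' i = Gy i)
      \<Longrightarrow> lty (Gr + drop_tctx (depth C) G') (plug C y') L (mr + m') (er + e')"
    using outer by (elim factors_through_holeE) blast
  obtain Gx Lx mx ex Gr' mr' er' where x: "lty Gx x Lx mx ex" "Q Lx"
      "Gy = Gr' + drop_tctx (depth D) Gx" "my = mr' + mx" "ey = er' + ex"
    and replug_D: "\<And>x' G' m' e'. lty G' x' Lx m' e' \<Longrightarrow> (\<And>i. i < depth D \<Longrightarrow> G' i = Gx i)
      \<Longrightarrow> lty (Gr' + drop_tctx (depth D) G') (plug D x') Ly (mr' + m') (er' + e')"
    using inner[OF y(2,1)] by (elim factors_through_holeE) blast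
  show ?thesis
  proof (rule factors_through_holeI[where Gr = "Gr + drop_tctx (depth C) Gr'" and mr = "mr + mr'"
        and er = "er + er'"])
    show "G = Gr + drop_tctx (depth C) Gr' + drop_tctx (depth (ccomp C D)) Gx"
      using y(3) x(3) by (simp add: drop_tctx_add drop_tctx_drop_tctx add.assoc)
  next
    fix x' G' m' e'
    assume "lty G' x' Lx m' e'" and agree: "\<And>i. i < depth (ccomp C D) \<Longrightarrow> G' i = Gx i"
    then have "lty (Gr' + drop_tctx (depth D) G') (plug D x') Ly (mr' + m') (er' + e')"
      by (intro replug_D) simp_all
    moreover have "(Gr' + drop_tctx (depth D) G') i = Gy i" if "i < depth C" for i
      using agree[of "i + depth D"] that x(3) by (simp add: plus_fun_apply)
    ultimately have "lty (Gr + drop_tctx (depth C) (Gr' + drop_tctx (depth D) G')) (plug C (plug D x')) L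
        (mr + (mr' + m')) (er + (er' + e'))"
      by (rule replug_C)
    then show "lty (Gr + drop_tctx (depth C) Gr' + drop_tctx (depth (ccomp C D)) G') (plug (ccomp C D) x') L
        (mr + mr' + m') (er + er' + e')"
      by (simp add: drop_tctx_add drop_tctx_drop_tctx add.assoc)
  qed (use x y in simp_all)
qed

lemma drop_tctx_Suc_0: "drop_tctx (Suc 0) G = (\<lambda>i. G (Suc i))"
  by (simp add: fun_eq_iff)

lemma factors_through_CAppL:
  assumes "lty G (App y t) L m e"
  shows "factors_through_hole (CAppL Hole t) (\<lambda>_. True) G y L m e"
proof -
  obtain G1 D M m1 e1 m2 e2 where "G = G1 + D" "m = m1 + m2 + 1" "e = e1 + e2"
    "lty G1 y (Arr M L) m1 e1" and u: "mty D t (M + {#TN#}) m2 e2"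
    using assms by (rule lty_AppE)
  then show ?thesis
    by (intro factors_through_holeI[where Gr = D and mr = "m2 + 1" and er = e2])
      (auto intro: lty_AppI[OF _ u] simp: add_ac)
qed

lemma factors_through_CESL:
  assumes "lty G (ES y t) L m e"
  shows "factors_through_hole (CESL Hole t) (\<lambda>L'. L' = L) G y L m e"
proof -
  obtain G1 D m1 e1 m2 e2 where "G = (\<lambda>i. G1 (Suc i)) + D" "m = m1 + m2" "e = e1 + e2"
    "lty G1 y L m1 e1" and u: "mty D t (G1 0 + {#TN#}) m2 e2"
    using assms by (rule lty_ESE)
  then show ?thesis
    by (intro factors_through_holeI[where Gr = D and mr = m2 and er = e2])
      (auto intro: lty_ESI simp: drop_tctx_Suc_0 add_ac)
qed

lemma factors_through_CESR:
  assumes "is_answer a" "lty G (ES a y) TN m e"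
  shows "factors_through_hole (CESR a Hole) (\<lambda>L. L = TN) G y TN m e"
proof -
  obtain G1 D m1 e1 m2 e2 where "G = (\<lambda>i. G1 (Suc i)) + D" "m = m1 + m2" "e = e1 + e2"
    and a: "lty G1 a TN m1 e1" and "mty D y (G1 0 + {#TN#}) m2 e2"
    using assms(2) by (rule lty_ESE)
  moreover have "G1 = 0" "m1 = 0" "e1 = 0"
    using lty_answer_TN[OF assms(1) a] by simp_all
  ultimately have "G = D" "m = m2" "e = e2" "lty D y TN m2 e2"
    by (simp_all add: mty_singleton_iff zero_fun_def)
  with a \<open>G1 = 0\<close> \<open>m1 = 0\<close> \<open>e1 = 0\<close> show ?thesis
    by (intro factors_through_holeI[where Gr = 0 and mr = 0 and er = 0])
      (auto intro!: lty_ESI simp: mty_singleton_iff zero_fun_def)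
qed

lemma factors_through_N:
  "is_N N \<Longrightarrow> lty G (plug N x) L m e \<Longrightarrow> factors_through_hole N (\<lambda>_. True) G x L m e"
proof (induction arbitrary: G L m e rule: is_N.induct)
  case 1
  then show ?case
    by (simp add: factors_through_Hole)
next
  case (2 N t)
  have "factors_through_hole (ccomp (CAppL Hole t) N) (\<lambda>_. True) G x L m e"
    by (rule factors_through_ccomp[OF factors_through_CAppL]) (use "2.prems" "2.IH" in simp_all)
  then show ?case
    by simp
next
  case (3 N t)
  have "factors_through_hole (ccomp (CESL Hole t) N) (\<lambda>_. True) G x L m e"
    by (rule factors_through_ccomp[OF factors_through_CESL]) (use "3.prems" "3.IH" in simp_all)
  then show ?case
    by simp
qed

lemma factors_through_A:
  "is_A A \<Longrightarrow> lty G (plug A x) TN m e \<Longrightarrow> factors_through_hole A (\<lambda>L. L = TN) G x TN m e"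
proof (induction arbitrary: G m e rule: is_A.induct)
  case 1
  then show ?case
    by (simp add: factors_through_Hole)
next
  case (2 a A)
  have "factors_through_hole (ccomp (CESR a Hole) A) (\<lambda>L. L = TN) G x TN m e"
    by (rule factors_through_ccomp[OF factors_through_CESR]) (use "2.hyps" "2.prems" "2.IH" in simp_all)
  then show ?case
    by simp
next
  case (3 A t)
  have "factors_through_hole (ccomp (CESL Hole t) A) (\<lambda>L. L = TN) G x TN m e"
    by (rule factors_through_ccomp[OF factors_through_CESL]) (use "3.prems" "3.IH" in simp_all)
  then show ?case
    by simp
qed

lemma factors_through_Y:
  assumes "is_Y Y" "lty G (plug Y x) TN m e"
  shows "factors_through_hole Y (\<lambda>_. True) G x TN m e"
proof -
  obtain A N where "is_A A" "is_N N" "Y = ccomp A N"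
    using assms(1) unfolding is_Y_def by blast
  with assms(2) show ?thesis
    by (auto intro: factors_through_ccomp[OF factors_through_A] factors_through_N)
qed

lemma factors_through_hole_replace:
  assumes "factors_through_hole C P G s L m e"
    and "\<And>Gs Ls ms es. P Ls \<Longrightarrow> lty Gs s Ls ms es
      \<Longrightarrow> \<exists>ms' es'. ms = ms' + dm \<and> es = es' + de \<and> lty Gs s' Ls ms' es'"
  shows "\<exists>m' e'. m = m' + dm \<and> e = e' + de \<and> lty G (plug C s') L m' e'"
proof -
  obtain Gs Ls ms es Gr mr er where "lty Gs s Ls ms es" "P Ls" "G = Gr + drop_tctx (depth C) Gs"
      "m = mr + ms" "e = er + es"
    and replug: "\<And>x' G' m' e'. lty G' x' Ls m' e' \<Longrightarrow> (\<And>i. i < depth C \<Longrightarrow> G' i = Gs i)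
      \<Longrightarrow> lty (Gr + drop_tctx (depth C) G') (plug C x') L (mr + m') (er + e')"
    using assms(1) by (elim factors_through_holeE) blast
  moreover obtain ms' es' where "ms = ms' + dm" "es = es' + de" "lty Gs s' Ls ms' es'"
    using assms(2) calculation(1,2) by blast
  ultimately show ?thesis
    by (metis add.assoc)
qed

section \<open>Quantitative subject reduction\<close>

lemma lty_plug_S_Lam:
  assumes "is_S S" "lty G (plug S (Lam b)) (Arr M L) m e" "mty D u (M + {#TN#}) m' e'"
  shows "lty (G + D) (plug S (ES b (shift (depth S) 0 u))) L (m + m') (e + e')"
  using assms
proof (induction arbitrary: G m e D u m' e' rule: is_S.induct)
  case 1
  then obtain G' L' where "G = (\<lambda>i. G' (Suc i))" "M = G' 0" "lty G' b L' m e" "L' = L"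
    by (auto elim: lty_LamE)
  with "1.prems"(2) show ?case
    by (auto intro: lty_ESI)
next
  case (2 S w)
  obtain G1 D1 m1 e1 m2 e2 where G: "G = (\<lambda>i. G1 (Suc i)) + D1" "m = m1 + m2" "e = e1 + e2"
    and S: "lty G1 (plug S (Lam b)) (Arr M L) m1 e1" and w: "mty D1 w (G1 0 + {#TN#}) m2 e2"
    using "2.prems"(1) by (auto elim: lty_ESE)
  have "mty (shift_tctx 1 0 D) (shift 1 0 u) (M + {#TN#}) m' e'"
    using "2.prems"(2) by (rule lty_mty_shift)
  from "2.IH"[OF S this]
  have "lty (G1 + shift_tctx 1 0 D) (plug S (ES b (shift (Suc (depth S)) 0 u))) L (m1 + m') (e1 + e')"
    by (simp add: shift_shift)
  with w show ?case
    by (auto intro!: lty_ESI simp: G shift_tctx_def fun_eq_iff plus_fun_apply zero_fun_apply)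
qed

lemma lty_root_m:
  assumes "root_m s s'" "lty G s L m e"
  shows "\<exists>m'. m = Suc m' \<and> lty G s' L m' e"
proof -
  obtain S b u where S: "is_S S" "s = App (plug S (Lam b)) u" "s' = plug S (ES b (shift (depth S) 0 u))"
    using assms(1) unfolding root_m_def by blast
  obtain G1 D M m1 e1 m2 e2 where "G = G1 + D" "m = m1 + m2 + 1" "e = e1 + e2"
    "lty G1 (plug S (Lam b)) (Arr M L) m1 e1" "mty D u (M + {#TN#}) m2 e2"
    using assms(2) S(2) by (auto elim: lty_AppE)
  with S show ?thesis
    using lty_plug_S_Lam by auto
qed

lemma factors_through_hole_VarE:
  assumes "factors_through_hole K P G (Var (depth K + i)) L m e"
  obtains Lx Gr er where "P Lx" "G = Gr + 0(i := {#Lx#})" "e = Suc er"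
    "\<And>x' G' m' e'. lty G' x' Lx m' e' \<Longrightarrow> (\<And>j. j < depth K \<Longrightarrow> G' j = {#})
      \<Longrightarrow> lty (Gr + drop_tctx (depth K) G') (plug K x') L (m + m') (er + e')"
proof -
  obtain Gx Lx mx ex Gr mr er where "lty Gx (Var (depth K + i)) Lx mx ex" "P Lx"
      "G = Gr + drop_tctx (depth K) Gx" "m = mr + mx" "e = er + ex"
    and replug: "\<And>x' G' m' e'. lty G' x' Lx m' e' \<Longrightarrow> (\<And>j. j < depth K \<Longrightarrow> G' j = Gx j)
      \<Longrightarrow> lty (Gr + drop_tctx (depth K) G') (plug K x') L (mr + m') (er + e')"
    using assms by (elim factors_through_holeE) blast
  moreover have "Gx = 0(depth K + i := {#Lx#})" "mx = 0" "ex = 1"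
    using lty_VarD calculation(1) by blast+
  moreover have "drop_tctx (depth K) (0(depth K + i := {#Lx#})) = 0(i := {#Lx#})"
    by (auto simp: fun_eq_iff zero_fun_apply)
  ultimately show thesis
    using that[of Lx Gr er] by (simp add: zero_fun_apply)
qed

lemma lty_root_e:
  assumes "root_e P s s'" "lty G s L m e"
    and factors: "\<And>K G' x m' e'. P K \<Longrightarrow> lty G' (plug K x) L m' e'
      \<Longrightarrow> factors_through_hole K (\<lambda>_. True) G' x L m' e'"
  shows "\<exists>e'. e = Suc e' \<and> lty G s' L m e'"
proof -
  obtain K u where K: "P K" "s = ES (plug K (Var (depth K))) u"
      "s' = ES (plug K (shift (Suc (depth K)) 0 u)) u"
    using assms(1) unfolding root_e_def by blast
  define d where "d = depth K"
  obtain G1 D m1 e1 m2 e2 where G: "G = (\<lambda>i. G1 (Suc i)) + D" "m = m1 + m2" "e = e1 + e2"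
    and "lty G1 (plug K (Var (depth K))) L m1 e1" and u: "mty D u (G1 0 + {#TN#}) m2 e2"
    using assms(2) K(2) by (auto elim: lty_ESE)
  then have "factors_through_hole K (\<lambda>_. True) G1 (Var (depth K + 0)) L m1 e1"
    by (intro factors K(1)) simp
  then obtain Lx Gr er where G1: "G1 = Gr + 0(0 := {#Lx#})" "e1 = Suc er"
    and replug: "\<And>x' G' m' e'. lty G' x' Lx m' e' \<Longrightarrow> (\<And>j. j < d \<Longrightarrow> G' j = {#})
      \<Longrightarrow> lty (Gr + drop_tctx d G') (plug K x') L (m1 + m') (er + e')"
    unfolding d_def by (elim factors_through_hole_VarE) blast
  \<comment> \<open>the copy of u replacing the occurrence is typed by the component Lx of u's multi type\<close>
  from u G1 have "mty D u ({#Lx#} + (Gr 0 + {#TN#})) m2 e2"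
    by (simp add: plus_fun_apply zero_fun_apply)
  then obtain D1 D2 mu m2' eu e2' where "mty D1 u {#Lx#} mu eu" and u2: "mty D2 u (Gr 0 + {#TN#}) m2' e2'"
    and D: "D = D1 + D2" "m2 = mu + m2'" "e2 = eu + e2'"
    by (rule mty_splitE)
  then have "lty (shift_tctx (Suc d) 0 D1) (shift (Suc d) 0 u) Lx mu eu"
    by (simp add: mty_singleton_iff lty_mty_shift)
  then have "lty (Gr + drop_tctx d (shift_tctx (Suc d) 0 D1)) (plug K (shift (Suc d) 0 u)) L
      (m1 + mu) (er + eu)"
    by (rule replug) (simp add: shift_tctx_def)
  then have "lty G s' L (m1 + mu + m2') (er + eu + e2')"
    unfolding K(3) d_def[symmetric]
    by (rule lty_ESI[OF _ _ _ HOL.refl HOL.refl])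
      (use u2 in \<open>auto simp: G G1 D shift_tctx_def fun_eq_iff plus_fun_apply zero_fun_apply\<close>)
  with G G1 D show ?thesis
    by (simp add: add.assoc)
qed

definition m_steps :: "ykind list \<Rightarrow> nat" where
  "m_steps ks = length (filter (\<lambda>k. k = Ym) ks)"

definition e_steps :: "ykind list \<Rightarrow> nat" where
  "e_steps ks = length (filter (\<lambda>k. k = YeAY \<or> k = YeYN) ks)"

lemma ystep_lty:
  assumes "ystep t k t'" "k \<noteq> Ygcv" "lty G t TN m e"
  shows "\<exists>m' e'. m = m' + m_steps [k] \<and> e = e' + e_steps [k] \<and> lty G t' TN m' e'"
proof (cases k)
  case Ym
  then obtain Y s s' where Y: "is_Y Y" "t = plug Y s" "t' = plug Y s'" and root: "root_m s s'"
    using assms(1) by auto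
  have "\<exists>m' e'. m = m' + 1 \<and> e = e' + 0 \<and> lty G (plug Y s') TN m' e'"
  proof (rule factors_through_hole_replace)
    show "factors_through_hole Y (\<lambda>_. True) G s TN m e"
      using factors_through_Y Y assms(3) by simp
    show "\<exists>ms' es'. ms = ms' + 1 \<and> es = es' + 0 \<and> lty Gs s' Ls ms' es'"
      if "lty Gs s Ls ms es" for Gs Ls ms es
      using lty_root_m[OF root that] by auto
  qed
  then show ?thesis
    using Ym Y(3) by (simp add: m_steps_def e_steps_def)
next
  case YeAY
  then obtain A s s' where A: "is_A A" "t = plug A s" "t' = plug A s'" and root: "root_e is_Y s s'"
    using assms(1) by auto
  have "\<exists>m' e'. m = m' + 0 \<and> e = e' + 1 \<and> lty G (plug A s') TN m' e'"
  proof (rule factors_through_hole_replace)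
    show "factors_through_hole A (\<lambda>L. L = TN) G s TN m e"
      using factors_through_A A assms(3) by simp
    show "\<exists>ms' es'. ms = ms' + 0 \<and> es = es' + 1 \<and> lty Gs s' Ls ms' es'"
      if "Ls = TN" "lty Gs s Ls ms es" for Gs Ls ms es
      using lty_root_e[OF root that(2)[unfolded that(1)] factors_through_Y] that(1) by auto
  qed
  then show ?thesis
    using YeAY A(3) by (simp add: m_steps_def e_steps_def)
next
  case YeYN
  then obtain Y s s' where Y: "is_Y Y" "t = plug Y s" "t' = plug Y s'" and root: "root_e is_N s s'"
    using assms(1) by auto
  have "\<exists>m' e'. m = m' + 0 \<and> e = e' + 1 \<and> lty G (plug Y s') TN m' e'"
  proof (rule factors_through_hole_replace)
    show "factors_through_hole Y (\<lambda>_. True) G s TN m e"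
      using factors_through_Y Y assms(3) by simp
    show "\<exists>ms' es'. ms = ms' + 0 \<and> es = es' + 1 \<and> lty Gs s' Ls ms' es'"
      if "lty Gs s Ls ms es" for Gs Ls ms es
      using lty_root_e[OF root that factors_through_N] by auto
  qed
  then show ?thesis
    using YeYN Y(3) by (simp add: m_steps_def e_steps_def)
qed (use assms(2) in simp)

section \<open>Progress\<close>

definition is_S_Lam :: "trm \<Rightarrow> bool" where
  "is_S_Lam t \<longleftrightarrow> (\<exists>S b. is_S S \<and> t = plug S (Lam b))"

lemma is_S_Lam_Lam [simp]: "is_S_Lam (Lam t)"
  unfolding is_S_Lam_def using is_S.intros(1) by fastforce

lemma is_S_Lam_ES: "is_S_Lam a \<Longrightarrow> is_S_Lam (ES a u)"
  unfolding is_S_Lam_def by (metis is_S.intros(2) plug.simps(4))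

lemma is_S_Lam_plug_S: "is_S S \<Longrightarrow> is_S_Lam s \<Longrightarrow> is_S_Lam (plug S s)"
  by (induction rule: is_S.induct) (auto intro: is_S_Lam_ES)

lemma is_answer_simps [simp]:
  "\<not> is_answer (Var i)" "\<not> is_answer (App a b)" "is_answer (Lam t)"
  "is_answer (ES a b) \<longleftrightarrow> is_answer a \<and> is_answer b"
  by (auto elim: is_answer.cases intro: is_answer.intros)

lemma is_answer_is_S_Lam: "is_answer a \<Longrightarrow> is_S_Lam a"
  by (induction rule: is_answer.induct) (auto intro: is_S_Lam_ES)

lemma is_A_cases: "is_A A \<Longrightarrow> is_S A \<or> (\<forall>x. is_S_Lam (plug A x))"
  by (induction rule: is_A.induct) (auto intro: is_S.intros is_S_Lam_ES is_answer_is_S_Lam)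

lemma is_N_ccomp_S: "is_S S \<Longrightarrow> is_N N \<Longrightarrow> is_N (ccomp S N)"
  by (induction rule: is_S.induct) (auto intro: is_N.intros)

lemma is_Y_cases: "is_Y Y \<Longrightarrow> is_N Y \<or> (\<forall>x. is_S_Lam (plug Y x))"
  unfolding is_Y_def using is_A_cases is_N_ccomp_S by fastforce

lemma is_Y_N: "is_N N \<Longrightarrow> is_Y N"
  unfolding is_Y_def using is_A.intros(1) by fastforce

lemma is_Y_A: "is_A A \<Longrightarrow> is_Y A"
  unfolding is_Y_def using is_N.intros(1) by fastforce

lemma is_A_ccomp: "is_A A \<Longrightarrow> is_A A' \<Longrightarrow> is_A (ccomp A A')"
  by (induction rule: is_A.induct) (auto intro: is_A.intros)

lemma is_Y_ccomp_A: "is_A A \<Longrightarrow> is_Y Y \<Longrightarrow> is_Y (ccomp A Y)"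
  unfolding is_Y_def by (metis ccomp_assoc is_A_ccomp)

lemma ystep_plug_A: "is_A A \<Longrightarrow> ystep t k t' \<Longrightarrow> ystep (plug A t) k (plug A t')"
  by (cases k) (simp_all, metis is_Y_ccomp_A plug_ccomp, metis is_A_ccomp plug_ccomp,
      (metis is_Y_ccomp_A plug_ccomp)+)

lemma is_N_S: "is_S S \<Longrightarrow> is_N S"
  by (induction rule: is_S.induct) (auto intro: is_N.intros)

lemma is_Y_CAppL: "is_Y Y \<Longrightarrow> \<not> is_S_Lam (plug Y s) \<Longrightarrow> is_Y (CAppL Y t)"
  using is_Y_cases is_Y_N is_N.intros(2) by blast

lemma ystep_App:
  assumes "\<not> is_S_Lam t1" "ystep t1 k t1'" "k \<noteq> Ygcv"
  shows "\<exists>k'. k' \<noteq> Ygcv \<and> ystep (App t1 t2) k' (App t1' t2)"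
proof (cases k)
  case YeAY
  then obtain A s s' where A: "is_A A" "t1 = plug A s" "t1' = plug A s'" and "root_e is_Y s s'"
    using assms(2) by auto
  then obtain K u where K: "is_Y K" "s = ES (plug K (Var (depth K))) u"
      "s' = ES (plug K (shift (Suc (depth K)) 0 u)) u"
    unfolding root_e_def by blast
  have "is_S A"
    using is_A_cases A assms(1) by blast
  moreover have "is_N K"
    using is_Y_cases[OF K(1)] assms(1) A(2) K(2) \<open>is_S A\<close> is_S_Lam_ES is_S_Lam_plug_S by blast
  ultimately have "is_Y (CAppL A t2)" "root_e is_N s s'"
    using K unfolding root_e_def by (blast intro: is_Y_N is_N.intros(2) is_N_S)+
  then have "ystep (plug (CAppL A t2) s) YeYN (plug (CAppL A t2) s')"
    unfolding ystep.simps by blast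
  then have "ystep (App t1 t2) YeYN (App t1' t2)"
    using A(2,3) by (simp only: plug.simps)
  then show ?thesis
    using ykind.distinct by blast
qed (use assms is_Y_CAppL in \<open>fastforce+\<close>)

lemma ystep_at_root:
  "root_m s s' \<Longrightarrow> ystep s Ym s'"
  "root_e is_Y s s' \<Longrightarrow> ystep s YeAY s'"
  using is_Y_N[OF is_N.intros(1)] is_A.intros(1) plug.simps(1) unfolding ystep.simps by metis+

definition stuck_on_free_var :: "trm \<Rightarrow> bool" where
  "stuck_on_free_var t \<longleftrightarrow> (\<exists>Y i. is_Y Y \<and> t = plug Y (Var (depth Y + i)))"

lemma ystep_progress:
  "is_answer t \<or> (\<exists>k t'. k \<noteq> Ygcv \<and> ystep t k t') \<or> stuck_on_free_var t"
proof (induction t)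
  case (Var i)
  have "is_Y Hole"
    by (simp add: is_Y_N is_N.intros(1))
  then show ?case
    unfolding stuck_on_free_var_def by fastforce
next
  case (Lam t)
  then show ?case
    by simp
next
  case (App t1 t2)
  show ?case
  proof (cases "is_S_Lam t1")
    case True
    then obtain S b where "is_S S" "t1 = plug S (Lam b)"
      unfolding is_S_Lam_def by blast
    then have "root_m (App t1 t2) (plug S (ES b (shift (depth S) 0 t2)))"
      unfolding root_m_def by blast
    then have "ystep (App t1 t2) Ym (plug S (ES b (shift (depth S) 0 t2)))"
      by (rule ystep_at_root)
    then show ?thesis
      using ykind.distinct by blast
  next
    case False
    then have "\<not> is_answer t1"
      using is_answer_is_S_Lam by blast
    moreover have "stuck_on_free_var (App t1 t2)" if "stuck_on_free_var t1"
      using that False is_Y_CAppL unfolding stuck_on_free_var_def by fastforce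
    ultimately show ?thesis
      using App.IH(1) ystep_App[OF False] by blast
  qed
next
  case (ES t1 t2)
  have CESL: "is_A (CESL Hole t2)" and CESR: "is_answer t1 \<Longrightarrow> is_A (CESR t1 Hole)"
    by (auto intro: is_A.intros)
  consider "is_answer t1" | k t1' where "k \<noteq> Ygcv" "ystep t1 k t1'"
    | Y i where "is_Y Y" "t1 = plug Y (Var (depth Y + i))"
    using ES.IH(1) unfolding stuck_on_free_var_def by blast
  then show ?case
  proof cases
    case 1
    moreover have "stuck_on_free_var (ES t1 t2)" if "stuck_on_free_var t2"
      using that is_Y_ccomp_A[OF CESR[OF 1]] unfolding stuck_on_free_var_def by fastforce
    ultimately show ?thesis
      using ES.IH(2) ystep_plug_A[OF CESR] by fastforce
  next
    case 2
    then show ?thesis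
      using ystep_plug_A[OF CESL] by fastforce
  next
    case (3 Y i)
    show ?thesis
    proof (cases i)
      case 0
      with 3 have "root_e is_Y (ES t1 t2) (ES (plug Y (shift (Suc (depth Y)) 0 t2)) t2)"
        unfolding root_e_def by auto
      then show ?thesis
        using ystep_at_root(2) ykind.distinct by blast
    next
      case (Suc j)
      have "is_Y (CESL Y t2)"
        using is_Y_ccomp_A[OF CESL 3(1)] by simp
      with 3 Suc show ?thesis
        unfolding stuck_on_free_var_def by (metis depth.simps(4) add_Suc_shift plug.simps(4))
    qed
  qed
qed

section \<open>Answers and weak normal forms\<close>

lemma is_answer_plug:
  "is_answer (plug W s) \<Longrightarrow> is_A W \<and> is_answer s \<and> (\<forall>s'. is_answer s' \<longrightarrow> is_answer (plug W s'))"
  by (induction W) (auto intro: is_A.intros)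

lemma is_answer_shift [simp]: "is_answer (shift n k t) \<longleftrightarrow> is_answer t"
  by (induction t arbitrary: k) auto

lemma answer_wstep_is_gcv:
  assumes "is_answer a" "wstep a a'"
  obtains a'' where "ystep a Ygcv a''" "is_answer a''" "size a'' < size a"
proof -
  obtain W s s' where a: "a = plug W s"
    and root: "root_m s s' \<or> root_e (\<lambda>_. True) s s' \<or> root_gcv s s'"
    using assms(2) unfolding wstep_def by blast
  have W: "is_A W" "is_answer s" "\<And>s'. is_answer s' \<Longrightarrow> is_answer (plug W s')"
    using is_answer_plug assms(1) a by blast+
  have "\<not> root_e (\<lambda>_. True) s s'"
    using W(2) is_answer_plug[of _ "Var _"] unfolding root_e_def by auto
  moreover have "\<not> root_m s s'"
    using W(2) unfolding root_m_def by auto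
  ultimately have gcv: "root_gcv s s'"
    using root by blast
  then obtain r S v where S: "is_S S" "is_value v" "s = ES (shift 1 0 r) (plug S v)"
      "s' = plug S (shift (depth S) 0 r)"
    unfolding root_gcv_def by blast
  have "is_answer s'"
    using W(2) S(3,4) is_answer_plug[of S v] by simp
  moreover have "size s' < size s"
    using size_plug[of S "shift (depth S) 0 r" v] S(2,3,4) by (auto elim: is_value.cases)
  then have "size (plug W s') < size a"
    using size_plug[of W s' s] a by simp
  moreover have "ystep a Ygcv (plug W s')"
    using is_Y_A[OF W(1)] gcv a by auto
  ultimately show thesis
    using that W(3) by blast
qed

lemma answer_reaches_w_normal:
  "is_answer a \<Longrightarrow> \<exists>n ks. ysteps a ks n \<and> w_normal n \<and> set ks \<subseteq> {Ygcv}"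
proof (induction a rule: measure_induct_rule[where f = size])
  case (less a)
  show ?case
  proof (cases "w_normal a")
    case True
    then show ?thesis
      using ysteps.refl by fastforce
  next
    case False
    then obtain a' where "wstep a a'"
      unfolding w_normal_def by blast
    with less.prems obtain a'' where "ystep a Ygcv a''" "is_answer a''" "size a'' < size a"
      by (rule answer_wstep_is_gcv)
    with less.IH show ?thesis
      by (fastforce intro: ysteps.step)
  qed
qed

lemma stuck_on_free_var_untypable:
  assumes "stuck_on_free_var t"
  shows "\<not> lty 0 t TN m e"
proof
  assume "lty 0 t TN m e"
  from assms obtain Y i where "is_Y Y" "t = plug Y (Var (depth Y + i))"
    unfolding stuck_on_free_var_def by blast
  with \<open>lty 0 t TN m e\<close> have "factors_through_hole Y (\<lambda>_. True) 0 (Var (depth Y + i)) TN m e"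
    by (simp add: factors_through_Y)
  then obtain Lx Gr where "(0 :: tctx) = Gr + 0(i := {#Lx#})"
    by (elim factors_through_hole_VarE) blast
  from fun_cong[OF this, of i] show False
    by (simp add: plus_fun_apply zero_fun_apply)
qed

lemma ysteps_w_normal_exact:
  "lty 0 t TN m e \<Longrightarrow> \<exists>n ks. ysteps t ks n \<and> w_normal n \<and> m_steps ks = m \<and> e_steps ks = e"
proof (induction "m + e" arbitrary: t m e rule: less_induct)
  case less
  consider "is_answer t" | k t' where "k \<noteq> Ygcv" "ystep t k t'"
    using ystep_progress stuck_on_free_var_untypable less.prems by blast
  then show ?case
  proof cases
    case 1
    then obtain n ks where "ysteps t ks n" "w_normal n" "set ks \<subseteq> {Ygcv}"
      using answer_reaches_w_normal by blast
    moreover have "m = 0" "e = 0"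
      using lty_answer_TN[OF 1 less.prems] by simp_all
    moreover have "m_steps ks = 0" "e_steps ks = 0"
      using \<open>set ks \<subseteq> {Ygcv}\<close> by (auto simp: m_steps_def e_steps_def filter_empty_conv)
    ultimately show ?thesis
      by auto
  next
    case (2 k t')
    then obtain m' e' where m: "m = m' + m_steps [k]" "e = e' + e_steps [k]" "lty 0 t' TN m' e'"
      using ystep_lty less.prems by blast
    moreover have "m_steps [k] + e_steps [k] = 1"
      using \<open>k \<noteq> Ygcv\<close> by (cases k) (simp_all add: m_steps_def e_steps_def)
    ultimately have "m' + e' < m + e"
      by simp
    then obtain n ks where "ysteps t' ks n" "w_normal n" "m_steps ks = m'" "e_steps ks = e'"
      using less.hyps m(3) by blast
    moreover have "ysteps t (k # ks) n"
      using 2(2) \<open>ysteps t' ks n\<close> by (rule ysteps.step)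
    moreover have "m_steps (k # ks) = m" "e_steps (k # ks) = e"
      using m \<open>m_steps ks = m'\<close> \<open>e_steps ks = e'\<close> by (simp_all add: m_steps_def e_steps_def)
    ultimately show ?thesis
      by blast
  qed
qed

theorem theorem12p5:
  assumes "closed t"
    and "lty empty_ctx t TN m e"
  shows "\<exists>n ks. ysteps t ks n \<and> w_normal n
           \<and> length (filter (\<lambda>k. k = Ym) ks) = m
           \<and> length (filter (\<lambda>k. k = YeAY \<or> k = YeYN) ks) = e"
  using ysteps_w_normal_exact assms(2) unfolding m_steps_def e_steps_def by simp

end
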